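(* Let $\mathcal{T}=\begin{pmatrix}\mathcal{A}&\mathcal{M}\\0&\mathcal{B}\end{pmatrix}$ be a triangular ring in which $\mathcal{A}$ and $\mathcal{B}$ are 2-torsion free. If $\phi:\mathcal{T}\to\mathcal{T}$ is an additive mapping such that $\phi(U)\circ V+U\circ\phi(V)=0$ for all $U,V\in\mathcal{T}$ with $UV=VU=0$, then there exist a derivation $\delta:\mathcal{T}\to\mathcal{T}$ and a multiplier $\eta:\mathcal{T}\to\mathcal{T}$ such that $\phi=\delta+\eta$. If moreover $\phi(I)=0$, then $\phi$ is a derivation.
   Context: A triangular ring: $\mathcal{A},\mathcal{B}$ are unital rings and $\mathcal{M}$ is a unital $(\mathcal{A},\mathcal{B})$-bimodule faithful on both sides (if $A\mathcal{M}=\{0\}$ then $A=0$; if $\mathcal{M}B=\{0\}$ then $B=0$); $\mathcal{T}$ is the set of matrices $\begin{pmatrix}A&M\\0&B\end{pmatrix}$ under usual matrix operations, with identity $I$. 2-torsion free: $2X=0\Rightarrow X=0$. $X\circ Y=XY+YX$. An additive $\delta$ is a derivation if $\delta(XY)=\delta(X)Y+X\delta(Y)$; an additive $\eta$ is a multiplier if $\eta(X)=\eta(I)X=X\eta(I)$ for all $X$. *)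

theory Defs
  imports Main
begin

definition unital_bimodule :: "('a::ring_1 \<Rightarrow> 'm::ab_group_add \<Rightarrow> 'm) \<Rightarrow> ('m \<Rightarrow> 'b::ring_1 \<Rightarrow> 'm) \<Rightarrow> bool" where
  "unital_bimodule lact ract \<longleftrightarrow>
     (\<forall>a a' m. lact (a + a') m = lact a m + lact a' m) \<and>
     (\<forall>a m m'. lact a (m + m') = lact a m + lact a m') \<and>
     (\<forall>a a' m. lact (a * a') m = lact a (lact a' m)) \<and>
     (\<forall>m. lact 1 m = m) \<and>
     (\<forall>m b b'. ract m (b + b') = ract m b + ract m b') \<and>
     (\<forall>m m' b. ract (m + m') b = ract m b + ract m' b) \<and>
     (\<forall>m b b'. ract m (b * b') = ract (ract m b) b') \<and>
     (\<forall>m. ract m 1 = m) \<and>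
     (\<forall>a m b. lact a (ract m b) = ract (lact a m) b)"

definition faithful_bimodule :: "('a::ring_1 \<Rightarrow> 'm::ab_group_add \<Rightarrow> 'm) \<Rightarrow> ('m \<Rightarrow> 'b::ring_1 \<Rightarrow> 'm) \<Rightarrow> bool" where
  "faithful_bimodule lact ract \<longleftrightarrow>
     (\<forall>a. (\<forall>m. lact a m = 0) \<longrightarrow> a = 0) \<and>
     (\<forall>b. (\<forall>m. ract m b = 0) \<longrightarrow> b = 0)"

definition two_torsion_free :: "'a::ab_group_add set \<Rightarrow> bool" where
  "two_torsion_free S \<longleftrightarrow> (\<forall>x\<in>S. x + x = 0 \<longrightarrow> x = 0)"

text \<open>Elements of the triangular ring T = [[A, M],[0, B]] are triples (a, m, b),
  standing for the matrix with entries a, m (top row) and 0, b (bottom row).\<close>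

definition tadd :: "'a::ring_1 \<times> 'm::ab_group_add \<times> 'b::ring_1 \<Rightarrow> 'a \<times> 'm \<times> 'b \<Rightarrow> 'a \<times> 'm \<times> 'b" where
  "tadd X Y = (fst X + fst Y, fst (snd X) + fst (snd Y), snd (snd X) + snd (snd Y))"

definition tzero :: "'a::ring_1 \<times> 'm::ab_group_add \<times> 'b::ring_1" where
  "tzero = (0, 0, 0)"

definition tone :: "'a::ring_1 \<times> 'm::ab_group_add \<times> 'b::ring_1" where
  "tone = (1, 0, 1)"

definition tmul :: "('a::ring_1 \<Rightarrow> 'm::ab_group_add \<Rightarrow> 'm) \<Rightarrow> ('m \<Rightarrow> 'b::ring_1 \<Rightarrow> 'm) \<Rightarrow>
    'a \<times> 'm \<times> 'b \<Rightarrow> 'a \<times> 'm \<times> 'b \<Rightarrow> 'a \<times> 'm \<times> 'b" where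
  "tmul lact ract X Y =
     (fst X * fst Y, lact (fst X) (fst (snd Y)) + ract (fst (snd X)) (snd (snd Y)), snd (snd X) * snd (snd Y))"

definition tjordan :: "('a::ring_1 \<Rightarrow> 'm::ab_group_add \<Rightarrow> 'm) \<Rightarrow> ('m \<Rightarrow> 'b::ring_1 \<Rightarrow> 'm) \<Rightarrow>
    'a \<times> 'm \<times> 'b \<Rightarrow> 'a \<times> 'm \<times> 'b \<Rightarrow> 'a \<times> 'm \<times> 'b" where
  "tjordan lact ract X Y = tadd (tmul lact ract X Y) (tmul lact ract Y X)"

definition t_additive :: "('a::ring_1 \<times> 'm::ab_group_add \<times> 'b::ring_1 \<Rightarrow> 'a \<times> 'm \<times> 'b) \<Rightarrow> bool" where
  "t_additive f \<longleftrightarrow> (\<forall>X Y. f (tadd X Y) = tadd (f X) (f Y))"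

definition t_derivation :: "('a::ring_1 \<Rightarrow> 'm::ab_group_add \<Rightarrow> 'm) \<Rightarrow> ('m \<Rightarrow> 'b::ring_1 \<Rightarrow> 'm) \<Rightarrow>
    ('a \<times> 'm \<times> 'b \<Rightarrow> 'a \<times> 'm \<times> 'b) \<Rightarrow> bool" where
  "t_derivation lact ract d \<longleftrightarrow> t_additive d \<and>
     (\<forall>X Y. d (tmul lact ract X Y) = tadd (tmul lact ract (d X) Y) (tmul lact ract X (d Y)))"

definition t_multiplier :: "('a::ring_1 \<Rightarrow> 'm::ab_group_add \<Rightarrow> 'm) \<Rightarrow> ('m \<Rightarrow> 'b::ring_1 \<Rightarrow> 'm) \<Rightarrow>
    ('a \<times> 'm \<times> 'b \<Rightarrow> 'a \<times> 'm \<times> 'b) \<Rightarrow> bool" where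
  "t_multiplier lact ract e \<longleftrightarrow> t_additive e \<and>
     (\<forall>X. e X = tmul lact ract (e tone) X \<and> e X = tmul lact ract X (e tone))"

end

theory Submission
  imports Defs "HOL.Modules"
begin

text \<open>Write \<open>\<phi>\<close> entrywise with respect to \<open>T = A \<oplus> M \<oplus> B\<close>. Testing the hypothesis on the
  orthogonal pairs \<open>(a,0,0), (0,0,b)\<close> and \<open>(a,am,0), (0,-mb,b)\<close> with \<open>a = 1\<close> or \<open>b = 1\<close>,
  2-torsion freeness kills all entries of \<open>\<phi>\<close> mapping between different corners except
  \<open>a \<mapsto> a m\<^sub>0\<close> and \<open>b \<mapsto> -m\<^sub>0 b\<close>, where \<open>m\<^sub>0\<close> is the \<open>M\<close>-entry of \<open>\<phi>(I)\<close>. The general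
  off-diagonal pair yields one identity linking the \<open>M\<close>-to-\<open>M\<close> entry with the diagonal ones;
  for \<open>a = b = 1\<close> it says \<open>c m = m c'\<close> with \<open>c, c'\<close> the diagonal entries of \<open>\<phi>(I)\<close>, and after
  subtracting multiplication by \<open>c\<close> and \<open>c'\<close> it becomes a pair of Leibniz rules, which
  faithfulness transfers from \<open>M\<close> to \<open>A\<close> and \<open>B\<close>. So \<open>\<phi>\<close> is a derivation plus the multiplier
  \<open>X \<mapsto> diag(c,c') X\<close>; as derivations vanish at \<open>I\<close>, \<open>\<phi>(I) = 0\<close> forces the multiplier to vanish.\<close>

locale bimodule =
  fixes lact :: "'a::ring_1 \<Rightarrow> 'm::ab_group_add \<Rightarrow> 'm"
    and ract :: "'m \<Rightarrow> 'b::ring_1 \<Rightarrow> 'm"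
  assumes unital: "unital_bimodule lact ract"
begin

lemma lact_add_left [simp]: "lact (a + a') m = lact a m + lact a' m"
  and lact_add_right [simp]: "lact a (m + m') = lact a m + lact a m'"
  and lact_mult [simp]: "lact (a * a') m = lact a (lact a' m)"
  and lact_one [simp]: "lact 1 m = m"
  and ract_add_right [simp]: "ract m (b + b') = ract m b + ract m b'"
  and ract_add_left [simp]: "ract (m + m') b = ract m b + ract m' b"
  and ract_mult [simp]: "ract m (b * b') = ract (ract m b) b'"
  and ract_one [simp]: "ract m 1 = m"
  and lact_ract_assoc [simp]: "lact a (ract m b) = ract (lact a m) b"
  using unital by (simp_all add: unital_bimodule_def)

lemma additive_lact: "additive (lact a)"
  and additive_lact_scalar: "additive (\<lambda>a. lact a m)"
  and additive_ract: "additive (\<lambda>m. ract m b)"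
  and additive_ract_scalar: "additive (ract m)"
  by unfold_locales simp_all

lemmas lact_zero_right [simp] = additive.zero[OF additive_lact]
  and lact_minus_right [simp] = additive.minus[OF additive_lact]
  and lact_diff_right [simp] = additive.diff[OF additive_lact]
  and lact_zero_left [simp] = additive.zero[OF additive_lact_scalar]
  and lact_minus_left [simp] = additive.minus[OF additive_lact_scalar]
  and lact_diff_left [simp] = additive.diff[OF additive_lact_scalar]
  and ract_zero_left [simp] = additive.zero[OF additive_ract]
  and ract_minus_left [simp] = additive.minus[OF additive_ract]
  and ract_diff_left [simp] = additive.diff[OF additive_ract]
  and ract_zero_right [simp] = additive.zero[OF additive_ract_scalar]
  and ract_minus_right [simp] = additive.minus[OF additive_ract_scalar]
  and ract_diff_right [simp] = additive.diff[OF additive_ract_scalar]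

lemma tmul_zero_left [simp]: "tmul lact ract tzero X = tzero"
  by (simp add: tmul_def tzero_def)

lemma tmul_one_left [simp]: "tmul lact ract tone X = X"
  and tmul_one_right [simp]: "tmul lact ract X tone = X"
  by (simp_all add: tmul_def tone_def)

text \<open>The block-diagonal map \<open>(DA, d, DB)\<close> plus the inner derivation \<open>X \<mapsto> X E - E X\<close>
  with \<open>E = (0, m0, 0)\<close>.\<close>

definition tri_derivation ::
    "('a \<Rightarrow> 'a) \<Rightarrow> ('m \<Rightarrow> 'm) \<Rightarrow> ('b \<Rightarrow> 'b) \<Rightarrow> 'm \<Rightarrow> 'a \<times> 'm \<times> 'b \<Rightarrow> 'a \<times> 'm \<times> 'b" where
  "tri_derivation DA d DB m0 = (\<lambda>(a, m, b). (DA a, lact a m0 - ract m0 b + d m, DB b))"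

lemma tri_derivation_triple [simp]:
  "tri_derivation DA d DB m0 (a, m, b) = (DA a, lact a m0 - ract m0 b + d m, DB b)"
  by (simp add: tri_derivation_def)

lemma t_derivation_tri_derivation:
  assumes "additive DA" "additive d" "additive DB"
    and "\<And>a a'. DA (a * a') = DA a * a' + a * DA a'"
    and "\<And>b b'. DB (b * b') = DB b * b' + b * DB b'"
    and "\<And>a m. d (lact a m) = lact (DA a) m + lact a (d m)"
    and "\<And>m b. d (ract m b) = ract (d m) b + ract m (DB b)"
  shows "t_derivation lact ract (tri_derivation DA d DB m0)"
  unfolding t_derivation_def t_additive_def
proof (intro conjI allI)
  fix X Y :: "'a \<times> 'm \<times> 'b"
  obtain a m b a' m' b' where XY: "X = (a, m, b)" "Y = (a', m', b')"
    by (cases X, cases Y) auto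
  show "tri_derivation DA d DB m0 (tadd X Y) =
      tadd (tri_derivation DA d DB m0 X) (tri_derivation DA d DB m0 Y)"
    using assms(1-3) by (simp add: XY tadd_def additive.add algebra_simps)
  show "tri_derivation DA d DB m0 (tmul lact ract X Y) =
      tadd (tmul lact ract (tri_derivation DA d DB m0 X) Y) (tmul lact ract X (tri_derivation DA d DB m0 Y))"
    using assms by (simp add: XY tadd_def tmul_def additive.add algebra_simps)
qed

lemma t_derivation_vanishes_at_one:
  assumes "t_derivation lact ract \<delta>"
  shows "\<delta> tone = tzero"
proof -
  have "\<delta> tone = \<delta> (tmul lact ract tone tone)"
    by simp
  also have "\<dots> = tadd (tmul lact ract (\<delta> tone) tone) (tmul lact ract tone (\<delta> tone))"
    using assms unfolding t_derivation_def by blast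
  also have "\<dots> = tadd (\<delta> tone) (\<delta> tone)"
    by simp
  finally show ?thesis
    by (cases "\<delta> tone") (simp add: tadd_def tzero_def)
qed

lemma t_derivation_if_vanishes_at_one:
  assumes "t_derivation lact ract \<delta>" "t_multiplier lact ract \<eta>"
    and "\<And>X. \<phi> X = tadd (\<delta> X) (\<eta> X)" "\<phi> tone = tzero"
  shows "t_derivation lact ract \<phi>"
proof -
  have "\<eta> tone = tzero"
    using assms(3-4) t_derivation_vanishes_at_one[OF assms(1)]
    by (cases "\<eta> tone") (simp add: tadd_def tzero_def)
  then have "\<eta> X = tzero" for X
    using assms(2) unfolding t_multiplier_def by (metis tmul_zero_left)
  then have "\<phi> = \<delta>"
    using assms(3) by (auto simp: fun_eq_iff tadd_def tzero_def)
  with assms(1) show ?thesis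
    by simp
qed

end

locale triangular_ring = bimodule lact ract
  for lact :: "'a::ring_1 \<Rightarrow> 'm::ab_group_add \<Rightarrow> 'm" and ract :: "'m \<Rightarrow> 'b::ring_1 \<Rightarrow> 'm" +
  assumes faithful: "faithful_bimodule lact ract"
begin

lemma lact_cancel:
  assumes "\<And>m. lact a m = lact a' m"
  shows "a = a'"
proof -
  have "\<forall>m. lact (a - a') m = 0"
    by (simp add: assms)
  then have "a - a' = 0"
    using faithful unfolding faithful_bimodule_def by blast
  then show ?thesis
    by simp
qed

lemma ract_cancel:
  assumes "\<And>m. ract m b = ract m b'"
  shows "b = b'"
proof -
  have "\<forall>m. ract m (b - b') = 0"
    by (simp add: assms)
  then have "b - b' = 0"
    using faithful unfolding faithful_bimodule_def by blast
  then show ?thesis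
    by simp
qed

lemma derivation_from_lact:
  assumes "\<And>a m. lact (D a) m = d (lact a m) - lact a (d m)"
  shows "D (a * a') = D a * a' + a * D a'"
  by (rule lact_cancel) (simp add: assms)

lemma derivation_from_ract:
  assumes "\<And>m b. ract m (D b) = d (ract m b) - ract (d m) b"
  shows "D (b * b') = D b * b' + b * D b'"
  by (rule ract_cancel) (simp add: assms)

lemma t_multiplier_corner:
  assumes "\<And>m. lact c m = ract m c'"
  shows "t_multiplier lact ract (tmul lact ract (c, 0, c'))"
proof -
  have central_c: "c * a = a * c" for a
    by (rule lact_cancel) (simp add: assms)
  have central_c': "b * c' = c' * b" for b
    by (rule ract_cancel) (simp flip: assms)
  have "tmul lact ract (c, 0, c') X = tmul lact ract X (c, 0, c')" for X
    using central_c[of "fst X"] central_c'[of "snd (snd X)"]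
    by (cases X) (simp add: tmul_def assms)
  then show ?thesis
    unfolding t_multiplier_def t_additive_def
    by (simp add: tmul_def tadd_def tone_def distrib_left)
qed

end

locale jordan_zero_product_derivable = triangular_ring lact ract
  for lact :: "'a::ring_1 \<Rightarrow> 'm::ab_group_add \<Rightarrow> 'm" and ract :: "'m \<Rightarrow> 'b::ring_1 \<Rightarrow> 'm" +
  fixes \<phi> :: "'a \<times> 'm \<times> 'b \<Rightarrow> 'a \<times> 'm \<times> 'b"
  assumes torsion_free_A: "two_torsion_free (UNIV :: 'a set)"
    and torsion_free_B: "two_torsion_free (UNIV :: 'b set)"
    and additive_phi: "t_additive \<phi>"
    and jordan_zero_product: "\<forall>U V. tmul lact ract U V = tzero \<and> tmul lact ract V U = tzero \<longrightarrow>
           tadd (tjordan lact ract (\<phi> U) V) (tjordan lact ract U (\<phi> V)) = tzero"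
begin

definition "phi_AA a = fst (\<phi> (a, 0, 0))"
definition "phi_AM a = fst (snd (\<phi> (a, 0, 0)))"
definition "phi_AB a = snd (snd (\<phi> (a, 0, 0)))"
definition "phi_MA m = fst (\<phi> (0, m, 0))"
definition "phi_MM m = fst (snd (\<phi> (0, m, 0)))"
definition "phi_MB m = snd (snd (\<phi> (0, m, 0)))"
definition "phi_BA b = fst (\<phi> (0, 0, b))"
definition "phi_BM b = fst (snd (\<phi> (0, 0, b)))"
definition "phi_BB b = snd (snd (\<phi> (0, 0, b)))"

lemmas phi_component_defs = phi_AA_def phi_AM_def phi_AB_def phi_MA_def phi_MM_def phi_MB_def
  phi_BA_def phi_BM_def phi_BB_def

lemma phi_tadd: "\<phi> (tadd X Y) = tadd (\<phi> X) (\<phi> Y)"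
  using additive_phi unfolding t_additive_def by blast

lemma phi_triple:
  "\<phi> (a, m, b) = (phi_AA a + phi_MA m + phi_BA b, phi_AM a + phi_MM m + phi_BM b,
                   phi_AB a + phi_MB m + phi_BB b)"
proof -
  have "(a, m, b) = tadd (a, 0, 0) (tadd (0, m, 0) (0, 0, b))"
    by (simp add: tadd_def)
  then have "\<phi> (a, m, b) = tadd (\<phi> (a, 0, 0)) (tadd (\<phi> (0, m, 0)) (\<phi> (0, 0, b)))"
    by (simp add: phi_tadd)
  then show ?thesis
    by (simp add: tadd_def phi_component_defs add.assoc)
qed

lemma phi_add_triple: "\<phi> (a + a', m + m', b + b') = tadd (\<phi> (a, m, b)) (\<phi> (a', m', b'))"
  using phi_tadd[of "(a, m, b)" "(a', m', b')"] by (simp add: tadd_def)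

lemma additive_phi_A: "additive phi_AA" "additive phi_AM" "additive phi_AB"
  by (unfold_locales; simp add: phi_component_defs tadd_def phi_add_triple[of _ _ 0 0 0 0, simplified])+

lemma additive_phi_M: "additive phi_MA" "additive phi_MM" "additive phi_MB"
  by (unfold_locales; simp add: phi_component_defs tadd_def phi_add_triple[of 0 0 _ _ 0 0, simplified])+

lemma additive_phi_B: "additive phi_BA" "additive phi_BM" "additive phi_BB"
  by (unfold_locales; simp add: phi_component_defs tadd_def phi_add_triple[of 0 0 0 0, simplified])+

lemmas phi_components_zero [simp] =
  additive_phi_A[THEN additive.zero] additive_phi_M[THEN additive.zero]
  additive_phi_B[THEN additive.zero]

lemmas phi_components_minus [simp] =
  additive_phi_A[THEN additive.minus] additive_phi_M[THEN additive.minus]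
  additive_phi_B[THEN additive.minus]

lemma jordan_orthogonal:
  assumes "tmul lact ract U V = tzero" "tmul lact ract V U = tzero"
  shows "tadd (tjordan lact ract (\<phi> U) V) (tjordan lact ract U (\<phi> V)) = tzero"
  using jordan_zero_product assms by blast

lemma double_zero_A: "x + x = (0::'a) \<Longrightarrow> x = 0"
  using torsion_free_A unfolding two_torsion_free_def by blast

lemma double_zero_B: "x + x = (0::'b) \<Longrightarrow> x = 0"
  using torsion_free_B unfolding two_torsion_free_def by blast

lemma diagonal_orthogonal_identities:
  "a * phi_BA b + phi_BA b * a = 0"
  "ract (phi_AM a) b + lact a (phi_BM b) = 0"
  "phi_AB a * b + b * phi_AB a = 0"
  using jordan_orthogonal[of "(a, 0, 0)" "(0, 0, b)"]
  by (simp_all add: phi_triple tjordan_def tmul_def tadd_def tzero_def)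

lemma phi_BA_zero [simp]: "phi_BA b = 0"
  by (rule double_zero_A) (use diagonal_orthogonal_identities(1)[of 1 b] in simp)

lemma phi_AB_zero [simp]: "phi_AB a = 0"
  by (rule double_zero_B) (use diagonal_orthogonal_identities(3)[of a 1] in simp)

lemma phi_BM_eq: "phi_BM b = - ract (phi_AM 1) b"
  using diagonal_orthogonal_identities(2)[of 1 b] by (simp add: eq_neg_iff_add_eq_0 add.commute)

lemma phi_AM_eq: "phi_AM a = lact a (phi_AM 1)"
  using diagonal_orthogonal_identities(2)[of a 1] by (simp add: phi_BM_eq eq_neg_iff_add_eq_0)

lemma offdiagonal_orthogonal_identity:
  "tadd (tjordan lact ract (\<phi> (a, lact a m, 0)) (0, - ract m b, b))
        (tjordan lact ract (a, lact a m, 0) (\<phi> (0, - ract m b, b))) = tzero"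
  by (rule jordan_orthogonal) (simp_all add: tmul_def tzero_def)

lemma phi_MA_zero [simp]: "phi_MA m = 0"
proof (rule double_zero_A)
  have "- phi_MA m = phi_MA m"
    using offdiagonal_orthogonal_identity[of 1 m 1]
    by (simp add: phi_triple tjordan_def tmul_def tadd_def tzero_def)
  then show "phi_MA m + phi_MA m = 0"
    by (metis add.left_inverse)
qed

lemma phi_MB_zero [simp]: "phi_MB m = 0"
  by (rule double_zero_B)
    (use offdiagonal_orthogonal_identity[of 1 m 1] in
      \<open>simp add: phi_triple tjordan_def tmul_def tadd_def tzero_def\<close>)

lemma phi_MM_bimodule_identity:
  "ract (phi_MM (lact a m)) b - lact a (phi_MM (ract m b)) =
   ract (lact (phi_AA a) m) b - ract (lact a m) (phi_BB b)"
  using offdiagonal_orthogonal_identity[of a m b]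
  by (simp add: phi_triple tjordan_def tmul_def tadd_def tzero_def phi_AM_eq[of a] phi_BM_eq
      algebra_simps)

definition "D_A a = phi_AA a - phi_AA 1 * a"
definition "D_M m = phi_MM m - lact (phi_AA 1) m"
definition "D_B b = phi_BB b - phi_BB 1 * b"

lemma lact_phi_AA_one: "lact (phi_AA 1) m = ract m (phi_BB 1)"
  using phi_MM_bimodule_identity[of 1 m 1] by simp

lemma D_M_lact: "D_M (lact a m) = lact (D_A a) m + lact a (D_M m)"
  using phi_MM_bimodule_identity[of a m 1]
  by (simp add: D_A_def D_M_def lact_phi_AA_one algebra_simps)

lemma D_M_ract: "D_M (ract m b) = ract (D_M m) b + ract m (D_B b)"
  using phi_MM_bimodule_identity[of 1 m b]
  by (simp add: D_B_def D_M_def lact_phi_AA_one algebra_simps)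

lemma additive_D: "additive D_A" "additive D_M" "additive D_B"
  by (unfold_locales; simp add: D_A_def D_M_def D_B_def algebra_simps additive.add[OF additive_phi_A(1)]
      additive.add[OF additive_phi_M(2)] additive.add[OF additive_phi_B(3)])+

lemma D_A_mult: "D_A (a * a') = D_A a * a' + a * D_A a'"
  by (rule derivation_from_lact[where d = D_M]) (simp add: D_M_lact)

lemma D_B_mult: "D_B (b * b') = D_B b * b' + b * D_B b'"
  by (rule derivation_from_ract[where d = D_M]) (simp add: D_M_ract)

lemma phi_decomposition:
  "\<phi> X = tadd (tri_derivation D_A D_M D_B (phi_AM 1) X) (tmul lact ract (phi_AA 1, 0, phi_BB 1) X)"
proof -
  obtain a m b where "X = (a, m, b)"
    by (cases X) auto
  then show ?thesis
    by (simp add: phi_triple phi_AM_eq[of a] phi_BM_eq tadd_def tmul_def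
        D_A_def D_M_def D_B_def lact_phi_AA_one)
qed

lemma derivation_multiplier_decomposition:
  "\<exists>\<delta> \<eta>. t_derivation lact ract \<delta> \<and> t_multiplier lact ract \<eta> \<and> (\<forall>X. \<phi> X = tadd (\<delta> X) (\<eta> X))"
  using t_derivation_tri_derivation[OF additive_D D_A_mult D_B_mult D_M_lact D_M_ract]
    t_multiplier_corner[OF lact_phi_AA_one] phi_decomposition
  by blast

end

theorem theorem2p11:
  fixes lact :: "'a::ring_1 \<Rightarrow> 'm::ab_group_add \<Rightarrow> 'm"
    and ract :: "'m \<Rightarrow> 'b::ring_1 \<Rightarrow> 'm"
    and \<phi> :: "'a \<times> 'm \<times> 'b \<Rightarrow> 'a \<times> 'm \<times> 'b"
  assumes "unital_bimodule lact ract"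
    and "faithful_bimodule lact ract"
    and "two_torsion_free (UNIV :: 'a set)"
    and "two_torsion_free (UNIV :: 'b set)"
    and "t_additive \<phi>"
    and "\<forall>U V. tmul lact ract U V = tzero \<and> tmul lact ract V U = tzero \<longrightarrow>
           tadd (tjordan lact ract (\<phi> U) V) (tjordan lact ract U (\<phi> V)) = tzero"
  shows "(\<exists>\<delta> \<eta>. t_derivation lact ract \<delta> \<and> t_multiplier lact ract \<eta> \<and>
            (\<forall>X. \<phi> X = tadd (\<delta> X) (\<eta> X)))
         \<and> (\<phi> tone = tzero \<longrightarrow> t_derivation lact ract \<phi>)"
proof -
  interpret jordan_zero_product_derivable lact ract \<phi>
    by unfold_locales (fact assms)+
  obtain \<delta> \<eta> where "t_derivation lact ract \<delta>" "t_multiplier lact ract \<eta>"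
    "\<And>X. \<phi> X = tadd (\<delta> X) (\<eta> X)"
    using derivation_multiplier_decomposition by blast
  then show ?thesis
    using t_derivation_if_vanishes_at_one by blast
qed

end
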